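(* Let $(\Phi,\cdot,\cap,\xi_\Phi,\delta_\Phi)$ be a transformative $\cap$-semigroup of transformations of a nonempty set $A$. Then for every subset $H_\Phi\subseteq\Phi$ and every $\varphi\in f_{\xi_\Phi}(H_\Phi)$, $$\bigcap_{\psi\in H_\Phi}\mathrm{pr}_1\psi\subseteq\mathrm{pr}_1\varphi.$$
   Context: A transformation of $A$ is a partial map $A\to A$, regarded as a subset of $A\times A$, with domain $\mathrm{pr}_1 f$ and image $\mathrm{pr}_2 f$. The product $f\cdot g$ is the composite "first $f$, then $g$": $(f\cdot g)(a)=g(f(a))$, defined exactly when $a\in\mathrm{pr}_1 f$ and $f(a)\in\mathrm{pr}_1 g$. A transformative $\cap$-semigroup of transformations is $(\Phi,\cdot,\cap,\xi_\Phi,\delta_\Phi)$ where $\Phi$ is a set of transformations of $A$ closed under this product and under set-theoretic intersection, $\xi_\Phi=\{(f,g)\in\Phi^2: f$ and $g$ coincide on $\mathrm{pr}_1 f\cap\mathrm{pr}_1 g\}$, and $\delta_\Phi=\{(f,g)\in\Phi^2:\mathrm{pr}_2 f\subseteq\mathrm{pr}_1 g\}$. Write $f\leqslant g$ iff $f\subseteq g$, $f\downarrow g$ iff $(f,g)\in\xi_\Phi$, $f\vdash g$ iff $(f,g)\in\delta_\Phi$. Let $\Phi^*=\Phi\cup\{e\}$ where $e$ is a new formally adjoined identity for the product, with conventions $e\leqslant e$, $e\vdash e$, $f\vdash e$ for all $f\in\Phi$; $a\boxdot b\leqslant c$ abbreviates $a\vdash b\wedge a\cdot b\leqslant c$. A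 subset $H\subseteq\Phi$ is $f_{\xi_\Phi}$-closed if for all $x,y,t\in\Phi^*$ and $z,u,v\in\Phi$: $u\downarrow v\wedge (u\cap v)\cdot x\boxdot y\leqslant z\cdot t\wedge u\in H\wedge v\cdot x\in H\Rightarrow z\in H$. For $X\subseteq\Phi$, $f_{\xi_\Phi}(X)$ is the least $f_{\xi_\Phi}$-closed subset of $\Phi$ containing $X$. The intersection over the empty family is taken to be $A$. *)

theory Defs
  imports Main
begin

text \<open>The product f \<cdot> g ("first f, then g") is relational
  composition f O g. The formally adjoined identity e of \<Phi>* = \<Phi> \<union> {e} is modelled
  by None, elements of \<Phi> by Some f.\<close>

definition transformation :: "'a set \<Rightarrow> ('a \<times> 'a) set \<Rightarrow> bool" where
  "transformation A f \<longleftrightarrow> f \<subseteq> A \<times> A \<and> single_valued f"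

definition transformative_cap_semigroup :: "'a set \<Rightarrow> ('a \<times> 'a) set set \<Rightarrow> bool" where
  "transformative_cap_semigroup A \<Phi> \<longleftrightarrow>
     (\<forall>f\<in>\<Phi>. transformation A f) \<and>
     (\<forall>f\<in>\<Phi>. \<forall>g\<in>\<Phi>. f O g \<in> \<Phi>) \<and>
     (\<forall>f\<in>\<Phi>. \<forall>g\<in>\<Phi>. f \<inter> g \<in> \<Phi>)"

definition coincide :: "('a \<times> 'a) set \<Rightarrow> ('a \<times> 'a) set \<Rightarrow> bool" where
  "coincide f g \<longleftrightarrow> (\<forall>a b c. (a, b) \<in> f \<and> (a, c) \<in> g \<longrightarrow> b = c)"

definition xi :: "('a \<times> 'a) set set \<Rightarrow> (('a \<times> 'a) set \<times> ('a \<times> 'a) set) set" where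
  "xi \<Phi> = {(f, g). f \<in> \<Phi> \<and> g \<in> \<Phi> \<and> coincide f g}"

definition delta :: "('a \<times> 'a) set set \<Rightarrow> (('a \<times> 'a) set \<times> ('a \<times> 'a) set) set" where
  "delta \<Phi> = {(f, g). f \<in> \<Phi> \<and> g \<in> \<Phi> \<and> Range f \<subseteq> Domain g}"

fun smult :: "('a \<times> 'a) set option \<Rightarrow> ('a \<times> 'a) set option \<Rightarrow> ('a \<times> 'a) set option" where
  "smult None x = x"
| "smult (Some f) None = Some f"
| "smult (Some f) (Some g) = Some (f O g)"

fun sleq :: "('a \<times> 'a) set option \<Rightarrow> ('a \<times> 'a) set option \<Rightarrow> bool" where
  "sleq (Some f) (Some g) = (f \<subseteq> g)"
| "sleq None None = True"
| "sleq _ _ = False"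

fun svdash :: "('a \<times> 'a) set set \<Rightarrow> ('a \<times> 'a) set option \<Rightarrow> ('a \<times> 'a) set option \<Rightarrow> bool" where
  "svdash \<Phi> (Some f) (Some g) = ((f, g) \<in> delta \<Phi>)"
| "svdash \<Phi> _ None = True"
| "svdash \<Phi> None (Some g) = False"

definition star :: "('a \<times> 'a) set set \<Rightarrow> ('a \<times> 'a) set option set" where
  "star \<Phi> = Some ` \<Phi> \<union> {None}"

definition fxi_closed :: "('a \<times> 'a) set set \<Rightarrow> ('a \<times> 'a) set set \<Rightarrow> bool" where
  "fxi_closed \<Phi> H \<longleftrightarrow> H \<subseteq> \<Phi> \<and>
     (\<forall>x\<in>star \<Phi>. \<forall>y\<in>star \<Phi>. \<forall>t\<in>star \<Phi>. \<forall>z\<in>\<Phi>. \<forall>u\<in>\<Phi>. \<forall>v\<in>\<Phi>.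
        (u, v) \<in> xi \<Phi> \<and>
        svdash \<Phi> (smult (Some (u \<inter> v)) x) y \<and>
        sleq (smult (smult (Some (u \<inter> v)) x) y) (smult (Some z) t) \<and>
        u \<in> H \<and> smult (Some v) x \<in> Some ` H
        \<longrightarrow> z \<in> H)"

definition fxi :: "('a \<times> 'a) set set \<Rightarrow> ('a \<times> 'a) set set \<Rightarrow> ('a \<times> 'a) set set" where
  "fxi \<Phi> X = \<Inter>{H. fxi_closed \<Phi> H \<and> X \<subseteq> H}"

end

theory Submission
  imports Defs
begin

text \<open>In a closure step, the premises \<open>u \<down> v\<close> and \<open>(u \<inter> v) \<cdot> x \<boxdot> y \<le> z \<cdot> t\<close> force
  \<open>pr\<^sub>1 u \<inter> pr\<^sub>1 (v \<cdot> x) \<subseteq> pr\<^sub>1 z\<close>: coincidence makes \<open>u \<inter> v\<close> defined on the common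
  domain, \<open>\<boxdot>\<close> keeps the domain of the composite with \<open>y\<close>, and inclusion can only enlarge
  it. Hence the elements of \<Phi> whose domain contains a fixed set D form an
  \<open>f\<^sub>\<xi>\<close>-closed set; take D to be the common domain of \<open>H\<^sub>\<Phi>\<close>. For empty \<open>H\<^sub>\<Phi>\<close> the
  empty set is already closed.\<close>

fun sdom :: "('a \<times> 'a) set option \<Rightarrow> 'a set" where
  "sdom None = UNIV"
| "sdom (Some f) = Domain f"

lemma sdom_smult_subset: "sdom (smult x y) \<subseteq> sdom x"
  by (cases x; cases y) auto

lemma sdom_smult_eq_if_svdash:
  assumes "svdash \<Phi> x y"
  shows "sdom (smult x y) = sdom x"
proof (cases x; cases y)
  fix f g assume "x = Some f" "y = Some g"
  then have "Range f \<subseteq> Domain g" using assms by (simp add: delta_def)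
  then show ?thesis using \<open>x = Some f\<close> \<open>y = Some g\<close> by (auto simp: relcomp.simps) blast
qed (use assms in auto)

lemma sdom_mono_if_sleq: "sleq x y \<Longrightarrow> sdom x \<subseteq> sdom y"
  by (cases x; cases y) auto

lemma Domain_inter_coincide:
  "coincide u v \<Longrightarrow> Domain (u \<inter> v) = Domain u \<inter> Domain v"
  unfolding coincide_def by blast

lemma sdom_smult_inter_coincide:
  assumes "coincide u v"
  shows "Domain u \<inter> sdom (smult (Some v) x) \<subseteq> sdom (smult (Some (u \<inter> v)) x)"
proof (cases x)
  case (Some g)
  have "a \<in> Domain ((u \<inter> v) O g)" if "(a, b) \<in> u" "(a, c) \<in> v" "(c, d) \<in> g" for a b c d
    using that assms unfolding coincide_def by blast
  then show ?thesis using Some by auto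
qed (simp add: Domain_inter_coincide[OF assms])

lemma Domain_subset_of_fxi_premises:
  assumes "coincide u v"
    and "svdash \<Phi> (smult (Some (u \<inter> v)) x) y"
    and "sleq (smult (smult (Some (u \<inter> v)) x) y) (smult (Some z) t)"
  shows "Domain u \<inter> sdom (smult (Some v) x) \<subseteq> Domain z"
proof -
  have "Domain u \<inter> sdom (smult (Some v) x) \<subseteq> sdom (smult (Some (u \<inter> v)) x)"
    using assms(1) by (rule sdom_smult_inter_coincide)
  also have "\<dots> = sdom (smult (smult (Some (u \<inter> v)) x) y)"
    using assms(2) by (rule sdom_smult_eq_if_svdash[symmetric])
  also have "\<dots> \<subseteq> sdom (smult (Some z) t)"
    using assms(3) by (rule sdom_mono_if_sleq)
  also have "\<dots> \<subseteq> Domain z"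
    using sdom_smult_subset[of "Some z" t] by simp
  finally show ?thesis .
qed

lemma fxi_closed_Domain_supersets: "fxi_closed \<Phi> {f \<in> \<Phi>. D \<subseteq> Domain f}"
  unfolding fxi_closed_def
proof (intro conjI ballI impI)
  fix x y t z u v
  assume "z \<in> \<Phi>" and prems: "(u, v) \<in> xi \<Phi> \<and>
      svdash \<Phi> (smult (Some (u \<inter> v)) x) y \<and>
      sleq (smult (smult (Some (u \<inter> v)) x) y) (smult (Some z) t) \<and>
      u \<in> {f \<in> \<Phi>. D \<subseteq> Domain f} \<and> smult (Some v) x \<in> Some ` {f \<in> \<Phi>. D \<subseteq> Domain f}"
  then obtain w where w: "smult (Some v) x = Some w" "D \<subseteq> Domain w" by auto
  have "Domain u \<inter> Domain w \<subseteq> Domain z"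
    using Domain_subset_of_fxi_premises[of u v \<Phi> x y z t] prems w(1) by (simp add: xi_def)
  then show "z \<in> {f \<in> \<Phi>. D \<subseteq> Domain f}"
    using \<open>z \<in> \<Phi>\<close> prems w(2) by auto
qed auto

lemma fxi_least: "fxi_closed \<Phi> K \<Longrightarrow> X \<subseteq> K \<Longrightarrow> fxi \<Phi> X \<subseteq> K"
  unfolding fxi_def by blast

lemma fxi_empty: "fxi \<Phi> {} = {}"
proof -
  have "fxi_closed \<Phi> {}" unfolding fxi_closed_def by simp
  then show ?thesis using fxi_least[of \<Phi> "{}" "{}"] by blast
qed

theorem proposition7:
  fixes A :: "'a set" and \<Phi> H :: "('a \<times> 'a) set set" and \<phi> :: "('a \<times> 'a) set"
  assumes "A \<noteq> {}"
    and "transformative_cap_semigroup A \<Phi>"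
    and "H \<subseteq> \<Phi>"
    and "\<phi> \<in> fxi \<Phi> H"
  shows "(if H = {} then A else (\<Inter>\<psi>\<in>H. Domain \<psi>)) \<subseteq> Domain \<phi>"
proof (cases "H = {}")
  case True
  then show ?thesis using assms(4) by (simp add: fxi_empty)
next
  case False
  let ?D = "\<Inter>\<psi>\<in>H. Domain \<psi>"
  have "H \<subseteq> {f \<in> \<Phi>. ?D \<subseteq> Domain f}" using assms(3) by auto
  then have "fxi \<Phi> H \<subseteq> {f \<in> \<Phi>. ?D \<subseteq> Domain f}"
    by (rule fxi_least[OF fxi_closed_Domain_supersets])
  then show ?thesis using assms(4) False by auto
qed

end
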